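(* Let $\mathcal{G}=(V,E)$ be a connected hypergraph on $n$ vertices with at least one pair of nonadjacent vertices, and let $\lambda=\frac{2\lambda_2(L_{\mathcal{G}})}{\lambda_n(L_{\mathcal{G}})+\lambda_2(L_{\mathcal{G}})}$. Then for any $S\subset V$, $$\frac{|\delta S|}{|S|}\ge(n-|S|)\,\frac{1-(1-\lambda)^2}{(1-\lambda)^2(n-|S|)+|S|}.$$ Moreover, if $|S|\le n/2$, then $$\frac{|\delta S|}{|S|}\ge\frac{2\lambda_n(L_{\mathcal{G}})\lambda_2(L_{\mathcal{G}})}{\lambda_n(L_{\mathcal{G}})^2+\lambda_2(L_{\mathcal{G}})^2}.$$
   Context: A hypergraph $\mathcal{G}=(V,E)$ has a finite vertex set $V$ and a set $E$ of subsets of $V$ (edges), each of cardinality at least $2$. Distinct vertices are adjacent if some edge contains both. The degree $d_i$ is the number of edges containing $i$. The Laplacian $L_{\mathcal{G}}$ has $(L_{\mathcal{G}})_{ii}=d_i$ and $(L_{\mathcal{G}})_{ij}=-\sum_{e\in E,\, i,j\in e}\frac{1}{|e|-1}$ for $i\ne j$, with eigenvalues $\lambda_1(L_{\mathcal{G}})\le\dots\le\lambda_n(L_{\mathcal{G}})$. The vertex boundary $\delta S$ is the set of vertices in $V\setminus S$ adjacent to some vertex of $S$. *)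

theory Defs
  imports "HOL-Analysis.Analysis" "HOL-Computational_Algebra.Polynomial" "HOL-Library.Multiset"
begin

text \<open>A hypergraph on the finite vertex type 'a (vertex set V = UNIV) with edge set E.\<close>
definition hypergraph :: "'a::finite set set \<Rightarrow> bool" where
  "hypergraph E \<longleftrightarrow> (\<forall>e\<in>E. card e \<ge> 2)"

definition hg_adj :: "'a set set \<Rightarrow> 'a \<Rightarrow> 'a \<Rightarrow> bool" where
  "hg_adj E i j \<longleftrightarrow> i \<noteq> j \<and> (\<exists>e\<in>E. i \<in> e \<and> j \<in> e)"

definition hg_connected :: "'a set set \<Rightarrow> bool" where
  "hg_connected E \<longleftrightarrow> (\<forall>i j. (hg_adj E)\<^sup>*\<^sup>* i j)"

definition hg_degree :: "'a set set \<Rightarrow> 'a \<Rightarrow> nat" where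
  "hg_degree E i = card {e\<in>E. i \<in> e}"

definition hg_laplacian :: "'a::finite set set \<Rightarrow> real^'a^'a" where
  "hg_laplacian E = (\<chi> i j. if i = j then real (hg_degree E i)
      else - (\<Sum>e\<in>{e\<in>E. i \<in> e \<and> j \<in> e}. 1 / (real (card e) - 1)))"

definition vertex_boundary :: "'a set set \<Rightarrow> 'a set \<Rightarrow> 'a set" where
  "vertex_boundary E S = {v. v \<notin> S \<and> (\<exists>u\<in>S. hg_adj E u v)}"

text \<open>Characteristic polynomial det(xI - A) and the eigenvalues (with multiplicity) in
  nondecreasing order; eig A k is the k-th smallest eigenvalue, 1-based.\<close>
definition charpoly :: "real^'n^'n \<Rightarrow> real poly" where
  "charpoly A = det (\<chi> i j. (if i = j then [:0, 1:] else 0) - [:A$i$j:])"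

definition eigenvalues_sorted :: "real^'n^'n \<Rightarrow> real list" where
  "eigenvalues_sorted A = sorted_list_of_multiset (proots (charpoly A))"

definition eig :: "real^'n^'n \<Rightarrow> nat \<Rightarrow> real" where
  "eig A k = eigenvalues_sorted A ! (k - 1)"

end

theory Submission
  imports Defs
begin

text \<open>
  Let \<open>x\<close> be the indicator vector of \<open>S\<close> and \<open>T = S \<union> \<delta>S\<close>. Since \<open>L\<close> vanishes on the
  rows outside \<open>T\<close> and the columns of \<open>S\<close>, the vector \<open>z = x - t L x\<close> with
  \<open>t = 2 / (\<lambda>\<^sub>2 + \<lambda>\<^sub>n)\<close> is supported in \<open>T\<close>, and its coordinates sum to \<open>|S|\<close> because
  \<open>L\<close> annihilates the constants. Cauchy--Schwarz gives \<open>|S|\<^sup>2 \<le> |T| \<parallel>z\<parallel>\<^sup>2\<close>. In an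
  orthonormal eigenbasis of \<open>L\<close> the operator \<open>I - t L\<close> fixes the constant direction and
  contracts all others by \<open>|1 - t \<mu>| \<le> (\<lambda>\<^sub>n - \<lambda>\<^sub>2) / (\<lambda>\<^sub>n + \<lambda>\<^sub>2) = 1 - \<lambda>\<close>, so
  \<open>\<parallel>z\<parallel>\<^sup>2 \<le> |S|\<^sup>2/n + (1 - \<lambda>)\<^sup>2 (|S| - |S|\<^sup>2/n)\<close>. Solving for \<open>|\<delta>S| = |T| - |S|\<close> gives
  the first bound, and \<open>|S| \<le> n/2\<close> turns it into the second.
\<close>

section \<open>Symmetric matrices and orthonormal eigenbases\<close>

lemma symmetric_matrix_inner_commute:
  fixes A :: "real^'n^'n"
  assumes "transpose A = A"
  shows "(A *v x) \<bullet> y = x \<bullet> (A *v y)"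
  by (metis assms dot_lmul_matrix vector_transpose_matrix)

lemma linear_coeff_zero_if_quadratic_nonpos:
  fixes a b :: real
  assumes "\<And>s. 2 * s * a + s^2 * b \<le> 0"
  shows "a = 0"
proof -
  define c where "c = \<bar>b\<bar> + 1"
  have c: "c > 0" "2 * c + b \<ge> 2" unfolding c_def by auto
  have "c^2 * (2 * (a/c) * a + (a/c)^2 * b) \<le> 0"
    using assms[of "a/c"] c by (simp add: mult_nonneg_nonpos)
  moreover have "c^2 * (2 * (a/c) * a + (a/c)^2 * b) = a^2 * (2 * c + b)"
    using c by (simp add: field_simps power2_eq_square)
  moreover have "0 \<le> a^2 * (2 * c + b)" using c by simp
  ultimately have "a^2 * (2 * c + b) = 0" by linarith
  thus ?thesis using c by simp
qed

lemma rayleigh_quotient_max_on_subspace: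
  fixes A :: "real^'n^'n"
  assumes sub: "subspace W" and nontriv: "W \<noteq> {0}"
  obtains x where "x \<in> W" "norm x = 1"
    "\<And>z. z \<in> W \<Longrightarrow> z \<bullet> (A *v z) \<le> (x \<bullet> (A *v x)) * (z \<bullet> z)"
proof -
  define K where "K = sphere (0::real^'n) 1 \<inter> W"
  obtain w where w: "w \<in> W" "w \<noteq> 0" using sub subspace_0 nontriv by blast
  have "compact K" unfolding K_def using closed_subspace[OF sub]
    by (intro compact_Int_closed) auto
  moreover have "(1 / norm w) *\<^sub>R w \<in> K" unfolding K_def using w sub
    by (simp add: subspace_mul)
  moreover have "continuous_on K (\<lambda>x. x \<bullet> (A *v x))"
    by (intro continuous_intros
        matrix_vector_mult_linear_continuous_on[THEN continuous_on_compose2[of UNIV]]) auto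
  ultimately obtain x where x: "x \<in> K" "\<And>y. y \<in> K \<Longrightarrow> y \<bullet> (A *v y) \<le> x \<bullet> (A *v x)"
    using continuous_attains_sup by (metis empty_iff)
  show thesis
  proof
    show "x \<in> W" "norm x = 1" using x(1) unfolding K_def by auto
    fix z assume zW: "z \<in> W"
    show "z \<bullet> (A *v z) \<le> (x \<bullet> (A *v x)) * (z \<bullet> z)"
    proof (cases "z = 0")
      case False
      define z' where "z' = (1 / norm z) *\<^sub>R z"
      have "z' \<in> K" unfolding K_def z'_def using zW sub False by (simp add: subspace_mul)
      hence "z' \<bullet> (A *v z') \<le> x \<bullet> (A *v x)" by (rule x(2))
      moreover have "z' \<bullet> (A *v z') = (z \<bullet> (A *v z)) / (norm z)^2"
        unfolding z'_def by (simp add: matrix_vector_mult_scaleR power2_eq_square)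
      ultimately have "z \<bullet> (A *v z) \<le> (x \<bullet> (A *v x)) * (norm z)^2"
        using False by (simp add: divide_le_eq)
      thus ?thesis by (simp add: power2_norm_eq_inner)
    qed simp
  qed
qed

lemma symmetric_invariant_subspace_unit_eigenvector:
  fixes A :: "real^'n^'n"
  assumes sym: "transpose A = A" and sub: "subspace W" and nontriv: "W \<noteq> {0}"
    and inv: "\<And>w. w \<in> W \<Longrightarrow> A *v w \<in> W"
  obtains x where "x \<in> W" "norm x = 1" "A *v x = (x \<bullet> (A *v x)) *\<^sub>R x"
proof -
  obtain x where xW: "x \<in> W" and nx: "norm x = 1"
    and max: "\<And>z. z \<in> W \<Longrightarrow> z \<bullet> (A *v z) \<le> (x \<bullet> (A *v x)) * (z \<bullet> z)"
    using rayleigh_quotient_max_on_subspace[OF sub nontriv] by blast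
  define \<mu> where "\<mu> = x \<bullet> (A *v x)"
  have xx: "x \<bullet> x = 1" using nx by (simp add: norm_eq_1)
  \<comment> \<open>First-order condition: moving from the maximiser \<open>x\<close> along \<open>v \<perp> x\<close> does not
      increase the Rayleigh quotient.\<close>
  have stationary: "v \<bullet> (A *v x) = 0" if vW: "v \<in> W" and vx: "v \<bullet> x = 0" for v
  proof (rule linear_coeff_zero_if_quadratic_nonpos)
    fix s :: real
    have "x + s *\<^sub>R v \<in> W" using xW vW sub by (simp add: subspace_add subspace_mul)
    from max[OF this] have "\<mu> + 2 * s * (v \<bullet> (A *v x)) + s^2 * (v \<bullet> (A *v v))
        \<le> \<mu> * (1 + s^2 * (v \<bullet> v))"
      using symmetric_matrix_inner_commute[OF sym, of v x] xx vx
      by (simp add: matrix_vector_right_distrib matrix_vector_mult_scaleR inner_add_left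
          inner_add_right \<mu>_def inner_commute power2_eq_square algebra_simps)
    thus "2 * s * (v \<bullet> (A *v x)) + s^2 * (v \<bullet> (A *v v) - \<mu> * (v \<bullet> v)) \<le> 0"
      by (simp add: algebra_simps)
  qed
  define v where "v = A *v x - \<mu> *\<^sub>R x"
  have vW: "v \<in> W" unfolding v_def using inv xW sub by (simp add: subspace_diff subspace_mul)
  have vx: "v \<bullet> x = 0"
    unfolding v_def using xx by (simp add: inner_diff_left inner_diff_right \<mu>_def inner_commute)
  have "v \<bullet> v = v \<bullet> (A *v x) - \<mu> * (v \<bullet> x)" unfolding v_def by (simp add: inner_diff_right)
  hence "v \<bullet> v = 0" using stationary[OF vW vx] vx by simp
  hence "A *v x = \<mu> *\<^sub>R x" unfolding v_def by simp
  with xW nx show thesis unfolding \<mu>_def by (rule that)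
qed

lemma span_insert_orthogonal_complement:
  fixes x :: "'a::real_inner"
  assumes sub: "subspace W" and xW: "x \<in> W" and xx: "x \<bullet> x = 1"
    and span: "span B = {v\<in>W. v \<bullet> x = 0}"
  shows "span (insert x B) = W"
proof
  show "W \<subseteq> span (insert x B)"
  proof
    fix v assume vW: "v \<in> W"
    have "v - (v \<bullet> x) *\<^sub>R x \<in> span B" unfolding span using vW xW sub xx
      by (simp add: subspace_diff subspace_mul inner_diff_left)
    hence "v - (v \<bullet> x) *\<^sub>R x \<in> span (insert x B)" using span_mono[of B "insert x B"] by auto
    moreover have "(v \<bullet> x) *\<^sub>R x \<in> span (insert x B)" by (simp add: span_base span_mul)
    ultimately show "v \<in> span (insert x B)" by (metis diff_add_cancel span_add)
  qed
  have "B \<subseteq> W" using span span_superset by blast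
  thus "span (insert x B) \<subseteq> W" using xW sub by (intro span_minimal) auto
qed

lemma symmetric_invariant_subspace_eigenbasis:
  fixes A :: "real^'n^'n"
  assumes sym: "transpose A = A"
  shows "subspace W \<Longrightarrow> (\<forall>w\<in>W. A *v w \<in> W) \<Longrightarrow> \<exists>B. B \<subseteq> W \<and> finite B \<and> span B = W
     \<and> pairwise orthogonal B \<and> (\<forall>b\<in>B. norm b = 1 \<and> A *v b = (b \<bullet> (A *v b)) *\<^sub>R b)"
proof (induction "dim W" arbitrary: W rule: less_induct)
  case less
  note sub = less.prems(1) and inv = less.prems(2)
  show ?case
  proof (cases "W = {0}")
    case True then show ?thesis by (intro exI[of _ "{}"]) auto
  next
    case False
    then obtain x where xW: "x \<in> W" and nx: "norm x = 1"
      and eig: "A *v x = (x \<bullet> (A *v x)) *\<^sub>R x"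
      using symmetric_invariant_subspace_unit_eigenvector[OF sym sub] inv by metis
    have xx: "x \<bullet> x = 1" using nx by (simp add: norm_eq_1)
    define W' where "W' = {v\<in>W. v \<bullet> x = 0}"
    have subW': "subspace W'" unfolding W'_def subspace_def using sub
      by (auto simp: subspace_add subspace_mul subspace_0 inner_add_left)
    have invW': "\<forall>v\<in>W'. A *v v \<in> W'"
    proof
      fix v assume v: "v \<in> W'"
      have "(A *v v) \<bullet> x = v \<bullet> (A *v x)" by (rule symmetric_matrix_inner_commute[OF sym])
      also have "\<dots> = 0" using v by (subst eig) (simp add: W'_def)
      finally show "A *v v \<in> W'" using v inv by (simp add: W'_def)
    qed
    have "x \<notin> W'" using xx unfolding W'_def by auto
    hence "W' \<subset> W" using xW unfolding W'_def by blast
    hence "dim W' < dim W" by (metis dim_psubset real_vector.span_eq_iff subW' sub)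
    then obtain B' where B': "B' \<subseteq> W'" "finite B'" "span B' = W'" "pairwise orthogonal B'"
      "\<forall>b\<in>B'. norm b = 1 \<and> A *v b = (b \<bullet> (A *v b)) *\<^sub>R b"
      using less.hyps[OF _ subW' invW'] by blast
    have "span (insert x B') = W"
      using span_insert_orthogonal_complement[OF sub xW xx] B'(3) unfolding W'_def by blast
    moreover have "pairwise orthogonal (insert x B')"
      using B'(1,4) unfolding pairwise_def orthogonal_def W'_def by (auto simp: inner_commute)
    ultimately show ?thesis using B'(1,2,5) xW nx eig unfolding W'_def
      by (intro exI[of _ "insert x B'"]) auto
  qed
qed

definition orthonormal_eigenbasis :: "real^'n^'n \<Rightarrow> ('n \<Rightarrow> real^'n) \<Rightarrow> ('n \<Rightarrow> real) \<Rightarrow> bool"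
  where "orthonormal_eigenbasis A h \<mu> \<longleftrightarrow>
    (\<forall>k l. h k \<bullet> h l = (if k = l then 1 else 0)) \<and> (\<forall>k. A *v h k = \<mu> k *\<^sub>R h k)"

lemma orthonormal_family_completeness:
  fixes h :: "'n::finite \<Rightarrow> real^'n"
  assumes "\<And>k l. h k \<bullet> h l = (if k = l then 1 else 0)"
  shows "(\<Sum>k\<in>UNIV. h k $ i * h k $ j) = (if i = j then 1 else 0)"
proof -
  define Q :: "real^'n^'n" where "Q = (\<chi> i k. h k $ i)"
  have "transpose Q ** Q = mat 1"
    using assms by (simp add: vec_eq_iff Q_def matrix_matrix_mult_def transpose_def mat_def inner_vec_def)
  hence "Q ** transpose Q = mat 1" by (rule matrix_left_right_inverse1)
  thus ?thesis by (simp add: vec_eq_iff Q_def matrix_matrix_mult_def transpose_def mat_def)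
qed

lemma orthonormal_family_parseval:
  fixes h :: "'n::finite \<Rightarrow> real^'n"
  assumes "\<And>k l. h k \<bullet> h l = (if k = l then 1 else 0)"
  shows "v \<bullet> w = (\<Sum>k\<in>UNIV. (v \<bullet> h k) * (w \<bullet> h k))"
proof -
  have "v \<bullet> w = (\<Sum>i\<in>UNIV. \<Sum>j\<in>UNIV. v$i * w$j * (if i = j then 1 else 0))"
    by (simp add: inner_vec_def if_distrib[of "\<lambda>x. _ * x"] cong: if_cong)
  also have "\<dots> = (\<Sum>i\<in>UNIV. \<Sum>j\<in>UNIV. \<Sum>k\<in>UNIV. v$i * w$j * (h k $ i * h k $ j))"
    by (simp add: orthonormal_family_completeness[OF assms, symmetric] sum_distrib_left)
  also have "\<dots> = (\<Sum>i\<in>UNIV. \<Sum>k\<in>UNIV. \<Sum>j\<in>UNIV. v$i * w$j * (h k $ i * h k $ j))"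
    by (rule sum.cong[OF refl], rule sum.swap)
  also have "\<dots> = (\<Sum>k\<in>UNIV. \<Sum>i\<in>UNIV. \<Sum>j\<in>UNIV. v$i * w$j * (h k $ i * h k $ j))"
    by (rule sum.swap)
  also have "\<dots> = (\<Sum>k\<in>UNIV. (v \<bullet> h k) * (w \<bullet> h k))"
    by (simp add: inner_vec_def sum_product mult_ac)
  finally show ?thesis .
qed

lemma orthonormal_basis_indexing:
  fixes B :: "(real^'n) set"
  assumes orth: "pairwise orthogonal B" and span: "span B = UNIV" and norm: "\<forall>b\<in>B. b \<bullet> b = 1"
    and u: "u \<in> B"
  obtains h :: "'n \<Rightarrow> real^'n" and k0
    where "\<And>k l. h k \<bullet> h l = (if k = l then 1 else 0)" "range h = B" "h k0 = u"
proof -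
  have "independent B" using orth norm pairwise_orthogonal_independent by fastforce
  hence "finite B" "card B = CARD('n)"
    using dim_eq_card[of B UNIV] span by (auto simp: finiteI_independent)
  then obtain h where h: "bij_betw h (UNIV::'n set) B"
    using finite_same_card_bij[of "UNIV::'n set" B] by auto
  then obtain k0 where "h k0 = u" using u unfolding bij_betw_def by (metis rangeE)
  moreover have "h k \<bullet> h l = (if k = l then 1 else 0)" for k l
    using h norm orth unfolding bij_betw_def inj_on_def pairwise_def orthogonal_def by fastforce
  ultimately show thesis using that h unfolding bij_betw_def by blast
qed

lemma symmetric_eigenbasis_with_constant_vector:
  fixes A :: "real^'n^'n"
  assumes sym: "transpose A = A" and const: "A *v vec 1 = 0"
  obtains h \<mu> k0 where "orthonormal_eigenbasis A h \<mu>"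
    "h k0 = (1 / sqrt (real CARD('n))) *\<^sub>R vec 1" "\<mu> k0 = 0"
proof -
  define N where "N = real CARD('n)"
  define u :: "real^'n" where "u = (1 / sqrt N) *\<^sub>R vec 1"
  have one: "vec 1 \<bullet> (vec 1 :: real^'n) = N" unfolding N_def by (simp add: inner_vec_def)
  have N: "N > 0" unfolding N_def by simp
  have uu: "u \<bullet> u = 1" unfolding u_def using one N by (simp add: power2_eq_square[symmetric])
  have Au: "A *v u = 0" unfolding u_def using const by (simp add: matrix_vector_mult_scaleR)
  define W where "W = {v. v \<bullet> (vec 1 :: real^'n) = 0}"
  have subW: "subspace W" unfolding W_def subspace_def by (auto simp: inner_add_left)
  have "\<forall>w\<in>W. A *v w \<in> W"
    using symmetric_matrix_inner_commute[OF sym, of _ "vec 1"] const by (simp add: W_def)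
  then obtain B' where B': "B' \<subseteq> W" "finite B'" "span B' = W" "pairwise orthogonal B'"
      "\<forall>b\<in>B'. norm b = 1 \<and> A *v b = (b \<bullet> (A *v b)) *\<^sub>R b"
    using symmetric_invariant_subspace_eigenbasis[OF sym subW] by blast
  define B where "B = insert u B'"
  have "pairwise orthogonal B"
    using B'(1,4) unfolding B_def pairwise_def orthogonal_def W_def u_def
    by (auto simp: inner_commute)
  moreover have "span B = UNIV"
  proof -
    have "v \<bullet> u = (1 / sqrt N) * (v \<bullet> vec 1)" for v unfolding u_def by (rule inner_scaleR_right)
    hence "v \<bullet> u = 0 \<longleftrightarrow> v \<bullet> vec 1 = 0" for v using N by simp
    hence "{v\<in>UNIV. v \<bullet> u = 0} = W" unfolding W_def by blast
    thus ?thesis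
      using span_insert_orthogonal_complement[OF subspace_UNIV _ uu] B'(3) unfolding B_def by simp
  qed
  moreover have "\<forall>b\<in>B. b \<bullet> b = 1" using B'(5) uu unfolding B_def by (auto simp: norm_eq_1)
  ultimately obtain h :: "'n \<Rightarrow> real^'n" and k0 where ortho: "\<And>k l. h k \<bullet> h l = (if k = l then 1 else 0)"
    and range: "range h = B" and k0: "h k0 = u"
    using orthonormal_basis_indexing[of B u] unfolding B_def by blast
  define \<mu> where "\<mu> k = h k \<bullet> (A *v h k)" for k
  have "A *v h k = \<mu> k *\<^sub>R h k" for k
  proof -
    have "h k \<in> insert u B'" using range unfolding B_def by auto
    thus ?thesis using B'(5) Au unfolding \<mu>_def by auto
  qed
  with ortho have "orthonormal_eigenbasis A h \<mu>" by (simp add: orthonormal_eigenbasis_def)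
  moreover have "\<mu> k0 = 0" unfolding \<mu>_def k0 Au by simp
  ultimately show thesis using k0 that unfolding u_def N_def by blast
qed

section \<open>Characteristic polynomial and sorted eigenvalues\<close>

lemma sum_pCons_linear: "(\<Sum>k\<in>K. [:a k, b k:]) = [:\<Sum>k\<in>K. a k, \<Sum>k\<in>K. b k:]"
  by (auto simp: poly_eq_iff coeff_sum coeff_pCons split: nat.split)

lemma sum_pCons_const: "(\<Sum>k\<in>K. [:a k:]) = [:\<Sum>k\<in>K. a k:]"
  by (auto simp: poly_eq_iff coeff_sum coeff_pCons split: nat.split)

lemma orthonormal_eigenbasis_decomposition:
  fixes A :: "real^'n^'n"
  assumes "orthonormal_eigenbasis A h \<mu>"
  shows "A $ i $ j = (\<Sum>k\<in>UNIV. h k $ i * \<mu> k * h k $ j)"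
proof -
  have ortho: "\<And>k l. h k \<bullet> h l = (if k = l then 1 else 0)" and eig: "\<And>k. A *v h k = \<mu> k *\<^sub>R h k"
    using assms by (auto simp: orthonormal_eigenbasis_def)
  have "A $ i $ j = (\<Sum>m\<in>UNIV. A$i$m * (if m = j then 1 else 0))"
    by (simp add: if_distrib[of "\<lambda>x. _ * x"] cong: if_cong)
  also have "\<dots> = (\<Sum>m\<in>UNIV. \<Sum>k\<in>UNIV. A$i$m * h k $ m * h k $ j)"
    by (simp add: orthonormal_family_completeness[OF ortho, symmetric] sum_distrib_left mult_ac)
  also have "\<dots> = (\<Sum>k\<in>UNIV. (A *v h k) $ i * h k $ j)"
    by (subst sum.swap) (simp add: matrix_vector_mult_def sum_distrib_right)
  also have "\<dots> = (\<Sum>k\<in>UNIV. h k $ i * \<mu> k * h k $ j)" by (simp add: eig mult_ac)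
  finally show ?thesis .
qed

lemma charpoly_orthonormal_eigenbasis:
  fixes A :: "real^'n^'n"
  assumes basis: "orthonormal_eigenbasis A h \<mu>"
  shows "charpoly A = (\<Prod>k\<in>UNIV. [:- \<mu> k, 1:])"
proof -
  have "\<And>k l. h k \<bullet> h l = (if k = l then 1 else 0)"
    using basis by (simp add: orthonormal_eigenbasis_def)
  note comp = orthonormal_family_completeness[OF this]
  define Q :: "real poly^'n^'n" where "Q = (\<chi> i k. [:h k $ i:])"
  define D :: "real poly^'n^'n" where "D = (\<chi> k l. if k = l then [:- \<mu> k, 1:] else 0)"
  \<comment> \<open>\<open>x I - A = Q (x I - diag \<mu>) Q\<^sup>T\<close> as polynomial matrices, with \<open>Q Q\<^sup>T = I\<close>.\<close>
  have "(Q ** D ** transpose Q) $ i $ j = (\<Sum>l\<in>UNIV. [:h l $ i * (- \<mu> l) * h l $ j, h l $ i * h l $ j:])"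
    for i j
    by (simp add: matrix_matrix_mult_def Q_def D_def transpose_def if_distrib[of "\<lambda>x. _ * x"]
        mult_pCons_left mult_pCons_right algebra_simps cong: if_cong)
  hence QDQ: "(\<chi> i j. (if i = j then [:0, 1:] else 0) - [:A$i$j:]) = Q ** D ** transpose Q"
    by (simp add: vec_eq_iff sum_pCons_linear comp orthonormal_eigenbasis_decomposition[OF basis]
        sum_negf)
  have "Q ** transpose Q = mat 1"
    by (simp add: vec_eq_iff mat_def matrix_matrix_mult_def transpose_def Q_def mult_ac
        sum_pCons_const comp)
  hence "det Q * det (transpose Q) = 1" by (metis det_I det_mul)
  moreover have "det D = (\<Prod>k\<in>UNIV. [:- \<mu> k, 1:])" by (subst det_diagonal) (auto simp: D_def)
  ultimately show ?thesis unfolding charpoly_def QDQ by (simp add: det_mul)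
qed

lemma mem_sum_singletons: "finite K \<Longrightarrow> x \<in># (\<Sum>k\<in>K. {#f k#}) \<longleftrightarrow> (\<exists>k\<in>K. x = f k)"
  by (induction K rule: finite_induct) auto

lemma sorted_list_of_multiset_add_zero:
  fixes R :: "real multiset"
  assumes nonneg: "\<forall>x\<in>#R. 0 \<le> x" and size: "size R = m" and m: "1 \<le> m"
  defines "xs \<equiv> sorted_list_of_multiset (add_mset 0 R)"
  shows "0 \<le> xs ! 1" and "xs ! 1 \<le> xs ! m" and "\<And>x. x \<in># R \<Longrightarrow> xs ! 1 \<le> x \<and> x \<le> xs ! m"
proof -
  define ys where "ys = sorted_list_of_multiset R"
  have mset_ys: "mset ys = R" and sorted: "sorted ys" unfolding ys_def by simp_all
  hence set_ys: "set ys = set_mset R" and len: "length ys = m"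
    using size by (metis set_mset_mset, metis size_mset)
  have xs: "xs = 0 # ys"
    unfolding xs_def sorted_list_of_multiset_insert ys_def[symmetric]
    by (rule insort_is_Cons) (use nonneg set_ys in auto)
  have first: "xs ! 1 = ys ! 0" and last: "xs ! m = ys ! (m - 1)" using m xs by (auto simp: nth_Cons')
  have bounds: "ys ! 0 \<le> x \<and> x \<le> ys ! (m - 1)" if x: "x \<in># R" for x
  proof -
    have "x \<in> set ys" using x set_ys by simp
    then obtain p where "p < m" "ys ! p = x" using len by (auto simp: in_set_conv_nth)
    thus ?thesis using sorted_nth_mono[OF sorted, of 0 p] sorted_nth_mono[OF sorted, of p "m-1"] len
      by auto
  qed
  show "\<And>x. x \<in># R \<Longrightarrow> xs ! 1 \<le> x \<and> x \<le> xs ! m" unfolding first last by (rule bounds)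
  have "ys ! 0 \<in> set ys" using len m by simp
  hence "ys ! 0 \<in># R" using set_ys by simp
  thus "0 \<le> xs ! 1" "xs ! 1 \<le> xs ! m" unfolding first last using nonneg bounds by auto
qed

lemma eig_bounds_orthonormal_eigenbasis:
  fixes A :: "real^'n^'n"
  assumes basis: "orthonormal_eigenbasis A h \<mu>" and zero: "\<mu> k0 = 0"
    and nonneg: "\<And>k. 0 \<le> \<mu> k" and card: "2 \<le> CARD('n)"
  shows "0 \<le> eig A 2" "eig A 2 \<le> eig A CARD('n)"
    and "\<And>k. k \<noteq> k0 \<Longrightarrow> eig A 2 \<le> \<mu> k \<and> \<mu> k \<le> eig A CARD('n)"
proof -
  define R where "R = (\<Sum>k\<in>UNIV-{k0}. {#\<mu> k#})"
  have "proots (charpoly A) = (\<Sum>k\<in>UNIV. proots [:- \<mu> k, 1:])"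
    unfolding charpoly_orthonormal_eigenbasis[OF basis] by (rule proots_prod) simp
  also have "\<dots> = add_mset 0 R"
    using zero by (simp add: proots_linear_factor R_def sum.remove[of UNIV k0])
  finally have eig: "eig A k = sorted_list_of_multiset (add_mset 0 R) ! (k - 1)" for k
    by (simp add: eig_def eigenvalues_sorted_def)
  have "\<forall>x\<in>#R. 0 \<le> x" using nonneg by (auto simp: R_def mem_sum_singletons)
  moreover have "size R = CARD('n) - 1" by (simp add: R_def size_multiset_sum)
  moreover have "1 \<le> CARD('n) - 1" using card by simp
  moreover have "\<mu> k \<in># R" if "k \<noteq> k0" for k using that by (auto simp: R_def mem_sum_singletons)
  ultimately show "0 \<le> eig A 2" "eig A 2 \<le> eig A CARD('n)"
    "\<And>k. k \<noteq> k0 \<Longrightarrow> eig A 2 \<le> \<mu> k \<and> \<mu> k \<le> eig A CARD('n)"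
    using sorted_list_of_multiset_add_zero[of R "CARD('n) - 1"] unfolding eig by auto
qed

lemma psd_symmetric_spectrum:
  fixes A :: "real^'n^'n"
  assumes sym: "transpose A = A" and const: "A *v vec 1 = 0"
    and psd: "\<And>x. 0 \<le> x \<bullet> (A *v x)" and card: "2 \<le> CARD('n)"
  obtains h \<mu> k0 where "orthonormal_eigenbasis A h \<mu>"
    "h k0 = (1 / sqrt (real CARD('n))) *\<^sub>R vec 1" "\<mu> k0 = 0"
    "0 \<le> eig A 2" "eig A 2 \<le> eig A CARD('n)"
    "\<And>k. k \<noteq> k0 \<Longrightarrow> eig A 2 \<le> \<mu> k \<and> \<mu> k \<le> eig A CARD('n)"
proof -
  obtain h \<mu> k0 where basis: "orthonormal_eigenbasis A h \<mu>"
    and hk0: "h k0 = (1 / sqrt (real CARD('n))) *\<^sub>R vec 1" and zero: "\<mu> k0 = 0"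
    using symmetric_eigenbasis_with_constant_vector[OF sym const] by blast
  have "\<mu> k = h k \<bullet> (A *v h k)" for k using basis by (simp add: orthonormal_eigenbasis_def)
  hence "0 \<le> \<mu> k" for k using psd by simp
  from eig_bounds_orthonormal_eigenbasis[OF basis zero this card] that[OF basis hk0 zero]
  show thesis by blast
qed

section \<open>The hypergraph Laplacian\<close>

lemma hg_laplacian_entry:
  "hg_laplacian E $ i $ j = (if i = j then real (hg_degree E i)
      else - (\<Sum>e\<in>{e\<in>E. i \<in> e \<and> j \<in> e}. 1 / (real (card e) - 1)))"
  by (simp add: hg_laplacian_def)

lemma hg_laplacian_symmetric: "transpose (hg_laplacian E) = hg_laplacian E"
proof -
  have "{e\<in>E. i \<in> e \<and> j \<in> e} = {e\<in>E. j \<in> e \<and> i \<in> e}" for i j by auto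
  thus ?thesis by (auto simp: vec_eq_iff transpose_def hg_laplacian_entry)
qed

lemma hg_laplacian_offdiag_nonpos:
  assumes hg: "hypergraph E" and "i \<noteq> j"
  shows "hg_laplacian E $ i $ j \<le> 0"
proof -
  have "1 / (real (card e) - 1) \<ge> 0" if "e \<in> E" for e
    using hg that unfolding hypergraph_def by force
  hence "(\<Sum>e\<in>{e\<in>E. i \<in> e \<and> j \<in> e}. 1 / (real (card e) - 1)) \<ge> 0"
    by (intro sum_nonneg) auto
  thus ?thesis using assms by (simp add: hg_laplacian_entry)
qed

lemma hg_laplacian_nonadjacent:
  assumes "i \<noteq> j" and "\<not> hg_adj E i j"
  shows "hg_laplacian E $ i $ j = 0"
proof -
  have "{e\<in>E. i \<in> e \<and> j \<in> e} = {}" using assms unfolding hg_adj_def by auto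
  hence "(\<Sum>e\<in>{e\<in>E. i \<in> e \<and> j \<in> e}. 1 / (real (card e) - 1)) = 0" by (simp only: sum.empty)
  thus ?thesis using assms by (simp add: hg_laplacian_entry)
qed

lemma hg_laplacian_row_sum:
  assumes hg: "hypergraph E"
  shows "(\<Sum>j\<in>UNIV. hg_laplacian E $ i $ j) = 0"
proof -
  define Ei where "Ei = {e\<in>E. i \<in> e}"
  define w where "w e = 1 / (real (card e) - 1)" for e :: "'a set"
  have "hg_laplacian E $ i $ j = - (\<Sum>e\<in>Ei. if j \<in> e then w e else 0)" if "j \<noteq> i" for j
  proof -
    have "{e\<in>E. i \<in> e \<and> j \<in> e} = {e\<in>Ei. j \<in> e}" unfolding Ei_def by auto
    thus ?thesis using that unfolding w_def by (simp add: hg_laplacian_entry sum.inter_filter)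
  qed
  hence "(\<Sum>j\<in>UNIV-{i}. hg_laplacian E $ i $ j) = - (\<Sum>j\<in>UNIV-{i}. \<Sum>e\<in>Ei. if j \<in> e then w e else 0)"
    by (simp add: sum_negf)
  also have "\<dots> = - (\<Sum>e\<in>Ei. \<Sum>j\<in>UNIV-{i}. if j \<in> e then w e else 0)"
    by (subst sum.swap) (rule refl)
  \<comment> \<open>Each edge through \<open>i\<close> contributes \<open>(|e| - 1) \<cdot> 1/(|e| - 1) = 1\<close>.\<close>
  also have "\<dots> = - real (card Ei)"
  proof -
    have "(\<Sum>j\<in>UNIV-{i}. if j \<in> e then w e else 0) = 1" if e: "e \<in> Ei" for e
    proof -
      have "card e \<ge> 2" "i \<in> e" using hg e unfolding hypergraph_def Ei_def by auto
      moreover have "{j\<in>UNIV-{i}. j \<in> e} = e - {i}" by auto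
      ultimately show ?thesis
        by (simp add: sum.inter_filter[symmetric] w_def of_nat_diff)
    qed
    thus ?thesis by simp
  qed
  finally show ?thesis
    by (simp add: sum.remove[of UNIV i] hg_laplacian_entry hg_degree_def Ei_def)
qed

lemma quadratic_form_nonneg_if_row_sums_zero:
  fixes A :: "real^'n^'n"
  assumes sym: "transpose A = A" and rows: "\<And>i. (\<Sum>j\<in>UNIV. A$i$j) = 0"
    and off: "\<And>i j. i \<noteq> j \<Longrightarrow> A$i$j \<le> 0"
  shows "0 \<le> x \<bullet> (A *v x)"
proof -
  have A_sym: "A$i$j = A$j$i" for i j using sym by (metis transpose_def vec_lambda_beta)
  have quad: "x \<bullet> (A *v x) = (\<Sum>i\<in>UNIV. \<Sum>j\<in>UNIV. A$i$j * x$i * x$j)"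
    by (simp add: inner_vec_def matrix_vector_mult_def sum_distrib_left mult_ac)
  have left: "(\<Sum>i\<in>UNIV. \<Sum>j\<in>UNIV. A$i$j * (x$i)^2) = 0"
    by (simp add: sum_distrib_right[symmetric] rows)
  have "(\<Sum>i\<in>UNIV. \<Sum>j\<in>UNIV. A$i$j * (x$j)^2) = (\<Sum>j\<in>UNIV. \<Sum>i\<in>UNIV. A$j$i * (x$j)^2)"
    by (subst sum.swap) (simp add: A_sym)
  hence right: "(\<Sum>i\<in>UNIV. \<Sum>j\<in>UNIV. A$i$j * (x$j)^2) = 0"
    by (simp add: sum_distrib_right[symmetric] rows)
  \<comment> \<open>\<open>x\<^sup>T A x = -1/2 \<Sum>\<^sub>i\<^sub>j A\<^sub>i\<^sub>j (x\<^sub>i - x\<^sub>j)\<^sup>2\<close>, and every term with \<open>i \<noteq> j\<close> is \<open>\<le> 0\<close>.\<close>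
  have "(\<Sum>i\<in>UNIV. \<Sum>j\<in>UNIV. A$i$j * (x$i - x$j)^2)
     = (\<Sum>i\<in>UNIV. \<Sum>j\<in>UNIV. A$i$j * (x$i)^2) + (\<Sum>i\<in>UNIV. \<Sum>j\<in>UNIV. A$i$j * (x$j)^2)
       - 2 * (\<Sum>i\<in>UNIV. \<Sum>j\<in>UNIV. A$i$j * x$i * x$j)"
    by (simp add: power2_diff algebra_simps sum.distrib sum_subtractf sum_distrib_left)
  hence "(\<Sum>i\<in>UNIV. \<Sum>j\<in>UNIV. A$i$j * (x$i - x$j)^2) = - 2 * (x \<bullet> (A *v x))"
    using left right quad by simp
  moreover have "(\<Sum>i\<in>UNIV. \<Sum>j\<in>UNIV. A$i$j * (x$i - x$j)^2) \<le> 0"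
  proof (intro sum_nonpos)
    show "A$i$j * (x$i - x$j)^2 \<le> 0" for i j
      by (cases "i = j") (auto intro: mult_nonpos_nonneg off)
  qed
  ultimately show ?thesis by simp
qed

lemma hg_laplacian_spectrum:
  fixes E :: "'a::finite set set"
  assumes hg: "hypergraph E" and card: "2 \<le> CARD('a)"
  obtains h \<mu> k0 where "orthonormal_eigenbasis (hg_laplacian E) h \<mu>"
    "h k0 = (1 / sqrt (real CARD('a))) *\<^sub>R vec 1" "\<mu> k0 = 0"
    "0 \<le> eig (hg_laplacian E) 2" "eig (hg_laplacian E) 2 \<le> eig (hg_laplacian E) CARD('a)"
    "\<And>k. k \<noteq> k0 \<Longrightarrow> eig (hg_laplacian E) 2 \<le> \<mu> k \<and> \<mu> k \<le> eig (hg_laplacian E) CARD('a)"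
proof (rule psd_symmetric_spectrum[OF hg_laplacian_symmetric])
  show "hg_laplacian E *v vec 1 = 0"
    using hg_laplacian_row_sum[OF hg] by (simp add: vec_eq_iff matrix_vector_mult_def)
  show "0 \<le> x \<bullet> (hg_laplacian E *v x)" for x
    by (intro quadratic_form_nonneg_if_row_sums_zero hg_laplacian_symmetric
        hg_laplacian_row_sum hg_laplacian_offdiag_nonpos hg)
qed (use card that in blast)+

lemma hg_laplacian_outside_boundary:
  assumes "j \<in> S" and "i \<notin> S \<union> vertex_boundary E S"
  shows "hg_laplacian E $ i $ j = 0"
proof (rule hg_laplacian_nonadjacent)
  show "i \<noteq> j" using assms by auto
  show "\<not> hg_adj E i j" using assms unfolding vertex_boundary_def hg_adj_def by auto
qed

section \<open>The spectral bound on vertex expansion\<close>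

lemma contraction_factor_bound:
  fixes a b \<mu> :: real
  assumes "0 \<le> a" "a \<le> \<mu>" "\<mu> \<le> b" "0 < a + b"
  shows "(1 - 2 / (a + b) * \<mu>)^2 \<le> ((b - a) / (b + a))^2"
proof -
  have "(a + b - 2 * \<mu>)^2 \<le> (b - a)^2"
  proof -
    have "(b - a)^2 - (a + b - 2 * \<mu>)^2 = 4 * (\<mu> - a) * (b - \<mu>)"
      by (simp add: power2_eq_square algebra_simps)
    moreover have "4 * (\<mu> - a) * (b - \<mu>) \<ge> 0" using assms by simp
    ultimately show ?thesis by linarith
  qed
  hence "(a + b - 2 * \<mu>)^2 / (a + b)^2 \<le> (b - a)^2 / (a + b)^2"
    by (rule divide_right_mono) simp
  moreover have "1 - 2 / (a + b) * \<mu> = (a + b - 2 * \<mu>) / (a + b)"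
    using assms by (simp add: field_simps)
  ultimately show ?thesis by (simp add: power_divide add.commute)
qed

lemma contraction_norm_bound:
  fixes A :: "real^'n^'n" and x :: "real^'n"
  assumes sym: "transpose A = A" and basis: "orthonormal_eigenbasis A h \<mu>" and zero: "\<mu> k0 = 0"
    and bounds: "\<And>k. k \<noteq> k0 \<Longrightarrow> a \<le> \<mu> k \<and> \<mu> k \<le> b" and ab: "0 \<le> a" "0 < a + b"
  defines "z \<equiv> x - (2 / (a + b)) *\<^sub>R (A *v x)"
  shows "z \<bullet> z \<le> (x \<bullet> h k0)^2 + ((b - a) / (b + a))^2 * (x \<bullet> x - (x \<bullet> h k0)^2)"
proof -
  define r where "r = ((b - a) / (b + a))^2"
  have ortho: "\<And>k l. h k \<bullet> h l = (if k = l then 1 else 0)" and eig: "\<And>k. A *v h k = \<mu> k *\<^sub>R h k"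
    using basis by (auto simp: orthonormal_eigenbasis_def)
  have square_sum: "v \<bullet> v = (v \<bullet> h k0)^2 + (\<Sum>k\<in>UNIV-{k0}. (v \<bullet> h k)^2)" for v
    using orthonormal_family_parseval[OF ortho, of v v]
    by (simp add: power2_eq_square sum.remove[of UNIV k0])
  have zh: "z \<bullet> h k = (1 - 2 / (a + b) * \<mu> k) * (x \<bullet> h k)" for k
    using symmetric_matrix_inner_commute[OF sym, of x "h k"]
    by (simp add: z_def eig inner_diff_left algebra_simps)
  have "(z \<bullet> h k)^2 \<le> r * (x \<bullet> h k)^2" if "k \<noteq> k0" for k
    unfolding zh power_mult_distrib r_def
    using contraction_factor_bound[of a "\<mu> k" b] bounds[OF that] ab by (simp add: mult_right_mono)
  hence "(\<Sum>k\<in>UNIV-{k0}. (z \<bullet> h k)^2) \<le> r * (\<Sum>k\<in>UNIV-{k0}. (x \<bullet> h k)^2)"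
    unfolding sum_distrib_left by (intro sum_mono) auto
  thus ?thesis unfolding square_sum[of z] square_sum[of x] r_def by (simp add: zh zero)
qed

lemma card_neighbourhood_spectral_bound:
  fixes A :: "real^'n^'n" and S T :: "'n set"
  assumes sym: "transpose A = A" and const: "A *v vec 1 = 0"
    and basis: "orthonormal_eigenbasis A h \<mu>"
    and hk0: "h k0 = (1 / sqrt (real CARD('n))) *\<^sub>R vec 1" and zero: "\<mu> k0 = 0"
    and bounds: "\<And>k. k \<noteq> k0 \<Longrightarrow> a \<le> \<mu> k \<and> \<mu> k \<le> b" and ab: "0 \<le> a" "0 < a + b"
    and supp: "\<And>i j. j \<in> S \<Longrightarrow> i \<notin> T \<Longrightarrow> A$i$j = 0" and ST: "S \<subseteq> T"
  shows "real (card S)^2 \<le> real (card T) * (real (card S)^2 / real CARD('n)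
      + ((b - a) / (b + a))^2 * (real (card S) - real (card S)^2 / real CARD('n)))"
proof -
  define s where "s = real (card S)"
  define N where "N = real CARD('n)"
  define x :: "real^'n" where "x = (\<chi> i. if i \<in> S then 1 else 0)"
  define z where "z = x - (2 / (a + b)) *\<^sub>R (A *v x)"
  have xx: "x \<bullet> x = s" and x1: "x \<bullet> vec 1 = s"
    unfolding x_def s_def
    by (simp_all add: inner_vec_def if_distrib[of "\<lambda>x. x * _"] sum.If_cases cong: if_cong)
  have xh0: "(x \<bullet> h k0)^2 = s^2 / N"
    unfolding hk0 N_def using x1 by (simp add: power_divide)
  have "(\<Sum>i\<in>UNIV. z $ i) = z \<bullet> vec 1" by (simp add: inner_vec_def)
  also have "\<dots> = s"
    using symmetric_matrix_inner_commute[OF sym, of x "vec 1"] const x1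
    by (simp add: z_def inner_diff_left)
  \<comment> \<open>\<open>z\<close> vanishes outside \<open>T\<close> because \<open>x\<close> does and \<open>A\<close> maps \<open>S\<close>-supported vectors into \<open>T\<close>.\<close>
  also have "(\<Sum>i\<in>UNIV. z $ i) = (\<Sum>i\<in>T. z $ i)"
    using ST supp by (intro sum.mono_neutral_right)
      (auto simp: z_def x_def matrix_vector_mult_def intro!: sum.neutral)
  finally have "s^2 = (\<Sum>i\<in>T. z $ i)^2" by simp
  also have "\<dots> \<le> real (card T) * (\<Sum>i\<in>T. (z $ i)^2)"
    by (metis sum_squared_le_sum_of_squares finite mult.commute)
  also have "\<dots> \<le> real (card T) * (z \<bullet> z)"
    unfolding inner_vec_def inner_real_def power2_eq_square by (rule mult_left_mono, rule sum_mono2) auto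
  also have "\<dots> \<le> real (card T) * (s^2 / N + ((b - a) / (b + a))^2 * (s - s^2 / N))"
    using contraction_norm_bound[OF sym basis zero bounds ab, of x] xx xh0
    by (intro mult_left_mono) (simp_all add: z_def)
  finally show ?thesis unfolding s_def N_def .
qed

lemma hg_boundary_spectral_bound:
  fixes E :: "'a::finite set set" and S :: "'a set"
  defines "L \<equiv> hg_laplacian E"
  assumes hg: "hypergraph E" and card: "2 \<le> CARD('a)" and pos: "0 < eig L 2 + eig L CARD('a)"
  shows "real (card S)^2 \<le> real (card S + card (vertex_boundary E S))
     * (real (card S)^2 / real CARD('a) + ((eig L CARD('a) - eig L 2) / (eig L CARD('a) + eig L 2))^2
        * (real (card S) - real (card S)^2 / real CARD('a)))"
proof -
  obtain h \<mu> k0 where basis: "orthonormal_eigenbasis L h \<mu>"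
    and hk0: "h k0 = (1 / sqrt (real CARD('a))) *\<^sub>R vec 1" and zero: "\<mu> k0 = 0"
    and nonneg: "0 \<le> eig L 2"
    and bounds: "\<And>k. k \<noteq> k0 \<Longrightarrow> eig L 2 \<le> \<mu> k \<and> \<mu> k \<le> eig L CARD('a)"
    using hg_laplacian_spectrum[OF hg card] unfolding L_def by blast
  have "card (S \<union> vertex_boundary E S) = card S + card (vertex_boundary E S)"
    by (rule card_Un_disjoint) (auto simp: vertex_boundary_def)
  moreover have "L *v vec 1 = 0"
    using hg_laplacian_row_sum[OF hg] by (simp add: L_def vec_eq_iff matrix_vector_mult_def)
  ultimately show ?thesis
    using card_neighbourhood_spectral_bound[OF _ _ basis hk0 zero bounds nonneg pos,
        of S "S \<union> vertex_boundary E S"] hg_laplacian_outside_boundary hg_laplacian_symmetric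
    unfolding L_def by fastforce
qed

section \<open>From the spectral bound to vertex expansion\<close>

lemma expansion_from_spectral_bound:
  fixes s N d c :: real
  assumes s: "0 < s" and sN: "s \<le> N" and c: "0 \<le> c" "c \<le> 1" and d: "0 \<le> d"
    and bound: "s^2 \<le> (s + d) * (s^2 / N + c * (s - s^2 / N))"
  shows "(N - s) * (1 - c) / (c * (N - s) + s) \<le> d / s"
    and "2 * s \<le> N \<Longrightarrow> (1 - c) / (1 + c) \<le> d / s"
proof -
  define D where "D = c * (N - s) + s"
  have N: "0 < N" using s sN by simp
  have D: "0 < D" unfolding D_def using s sN c by (simp add: add_nonneg_pos)
  have "s^2 * N \<le> (s + d) * (s^2 / N + c * (s - s^2 / N)) * N"
    using bound N by (simp add: mult_right_mono)
  also have "\<dots> = (s + d) * s * D"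
    unfolding D_def using N by (simp add: field_simps power2_eq_square)
  finally have "s * (s * N) \<le> s * ((s + d) * D)" by (simp add: power2_eq_square mult_ac)
  hence "s * N \<le> (s + d) * D" using s by simp
  moreover have "(N - s) * (1 - c) * s = s * (N - D)" unfolding D_def by (simp add: algebra_simps)
  ultimately have key: "(N - s) * (1 - c) * s \<le> d * D" by (simp add: algebra_simps)
  show first: "(N - s) * (1 - c) / D \<le> d / s"
    using key D s by (simp add: divide_le_eq le_divide_eq mult.commute)
  assume "2 * s \<le> N"
  hence "0 \<le> (1 - c) * (N - 2 * s)" using c by simp
  moreover have "(N - s) * (1 - c) * (1 + c) - (1 - c) * D = (1 - c) * (N - 2 * s)"
    unfolding D_def by (simp add: algebra_simps)
  ultimately have "(1 - c) * D \<le> (N - s) * (1 - c) * (1 + c)" by linarith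
  hence "(1 - c) / (1 + c) \<le> (N - s) * (1 - c) / D"
    using D c by (simp add: divide_le_eq le_divide_eq mult.commute mult.left_commute)
  with first show "(1 - c) / (1 + c) \<le> d / s" by linarith
qed

lemma spectral_ratio_identities:
  fixes a b :: real
  assumes "0 \<le> a" "a \<le> b" "0 < a + b"
  defines "c \<equiv> ((b - a) / (b + a))^2"
  shows "(1 - 2 * a / (b + a))^2 = c" and "0 \<le> c" "c \<le> 1"
    and "(1 - c) / (1 + c) = 2 * b * a / (b^2 + a^2)"
proof -
  have ba: "0 < b + a" using assms by simp
  show "(1 - 2 * a / (b + a))^2 = c" unfolding c_def using ba by (simp add: field_simps)
  have "0 \<le> (b - a) / (b + a)" "(b - a) / (b + a) \<le> 1" using assms ba by auto
  thus "0 \<le> c" "c \<le> 1" unfolding c_def by (simp_all add: power_le_one)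
  define p where "p = (b + a)^2"
  define q where "q = (b - a)^2"
  have c_eq: "c = q / p" unfolding c_def p_def q_def by (simp add: power_divide)
  have "0 < p" "0 < p + q" unfolding p_def q_def using ba by (auto simp: add_pos_nonneg)
  hence "1 - c = (p - q) / p" "1 + c = (p + q) / p" unfolding c_eq by (simp_all add: field_simps)
  hence "(1 - c) / (1 + c) = (p - q) / (p + q)" using \<open>0 < p\<close> by simp
  also have "\<dots> = (2 * (2 * b * a)) / (2 * (b^2 + a^2))"
    unfolding p_def q_def by (simp add: power2_eq_square algebra_simps)
  also have "\<dots> = 2 * b * a / (b^2 + a^2)" by (rule mult_divide_mult_cancel_left) simp
  finally show "(1 - c) / (1 + c) = 2 * b * a / (b^2 + a^2)" .
qed

theorem corollary4:
  fixes E :: "'a::finite set set" and S :: "'a set"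
  defines "n \<equiv> CARD('a)"
  defines "L \<equiv> hg_laplacian E"
  defines "lam \<equiv> 2 * eig L 2 / (eig L n + eig L 2)"
  assumes "hypergraph E"
    and "hg_connected E"
    and "\<exists>i j. i \<noteq> j \<and> \<not> hg_adj E i j"
    and "S \<noteq> {}"
  shows "real (card (vertex_boundary E S)) / real (card S)
           \<ge> real (n - card S) * (1 - (1 - lam)^2)
               / ((1 - lam)^2 * real (n - card S) + real (card S))
         \<and> (real (card S) \<le> real n / 2 \<longrightarrow>
         real (card (vertex_boundary E S)) / real (card S)
           \<ge> 2 * eig L n * eig L 2 / ((eig L n)^2 + (eig L 2)^2))"
proof -
  obtain i j :: 'a where "i \<noteq> j" using assms(6) by blast
  hence n2: "2 \<le> n" using card_mono[of UNIV "{i, j}"] unfolding n_def by simp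
  obtain a0: "0 \<le> eig L 2" and ab: "eig L 2 \<le> eig L n"
    using hg_laplacian_spectrum[OF assms(4) n2[unfolded n_def]] unfolding L_def n_def by metis
  have s: "0 < real (card S)" "real (card S) \<le> real n" "real (n - card S) = real n - real (card S)"
    using assms(7) card_mono[of UNIV S] unfolding n_def by (auto simp: card_gt_0_iff of_nat_diff)
  show ?thesis
  proof (cases "eig L 2 + eig L n = 0")
    case True
    with a0 ab have "eig L 2 = 0" "eig L n = 0" by auto
    thus ?thesis unfolding lam_def by simp
  next
    case False
    with a0 ab have pos: "0 < eig L 2 + eig L n" by simp
    note ratio = spectral_ratio_identities[OF a0 ab pos]
    have "real (card S)^2 \<le> (real (card S) + real (card (vertex_boundary E S)))
      * (real (card S)^2 / real n + ((eig L n - eig L 2) / (eig L n + eig L 2))^2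
        * (real (card S) - real (card S)^2 / real n))"
      using hg_boundary_spectral_bound[OF assms(4) n2[unfolded n_def], of S] pos
      unfolding L_def n_def by (simp add: add.commute)
    note expansion = expansion_from_spectral_bound[OF s(1,2) ratio(2,3) of_nat_0_le_iff this]
    show ?thesis
      using expansion s(3) unfolding lam_def ratio(1) ratio(4)[symmetric] by simp
  qed
qed

end
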